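(* Let $d\ge 2$ be an integer and for $x>0$ let $$\tau_d(x)=\frac{e^{-x}x^d}{d!},\qquad \varphi_d(x)=1-\tau_d(x)-\tau_d(x)\frac{(x-d)^2}{x}.$$ Then $\inf_{x>0}\varphi_d(x)>0$. *)

theory Defs
  imports Complex_Main
begin

definition tau :: "nat \<Rightarrow> real \<Rightarrow> real" where
  "tau d x = exp (- x) * x ^ d / fact d"

definition phi :: "nat \<Rightarrow> real \<Rightarrow> real" where
  "phi d x = 1 - tau d x - tau d x * (x - real d)^2 / x"

end

theory Submission imports Defs begin

(* Writing tau d x * (1 + (x - d)^2 / x) = defect d x / d!  with

     defect d x = exp (-x) * x^(d-1) * (x + (x - d)^2),

   the claim reduces to the uniform bound  defect d x <= 2 d!/e  for x > 0,
   because then phi d x >= 1 - 2/e > 0 for every x > 0.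

   The derivative of the defect is exp (-x) x^(d-2) (d - x) ((x - d)^2 - d),
   so on (0, d] the defect peaks at d - sqrt d and on [d, oo) at d + sqrt d.
   At such a critical point c we have (c - d)^2 = d, hence
   defect d c = exp (-c) c^(d-1) (c + d), which is bounded with the classical
   estimate  exp (-y) y^m <= m^m e^(-m) <= m!/e  (m >= 1, y > 0). *)

definition defect :: "nat \<Rightarrow> real \<Rightarrow> real" where
  "defect d x = exp (- x) * x ^ (d - 1) * (x + (x - real d)^2)"

lemma phi_eq_defect:
  assumes "d \<ge> 1" and "x > 0"
  shows "phi d x = 1 - defect d x / fact d"
proof -
  have "x ^ d = x * x ^ (d - 1)"
    using assms(1) by (simp flip: power_Suc)
  then show ?thesis
    using assms(2) by (simp add: phi_def tau_def defect_def field_simps)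
qed

lemma exp_neg_mult_power_le:
  fixes y :: real
  assumes "y > 0" and "m \<ge> 1"
  shows "exp (- y) * y ^ m \<le> exp (- real m) * real m ^ m"
proof -
  have "y / m \<le> exp (y / m - 1)"
    using exp_ge_add_one_self[of "y / m - 1"] by simp
  then have "(y / m) ^ m \<le> exp (y / m - 1) ^ m"
    using assms by (intro power_mono) auto
  also have "\<dots> = exp (y - m)"
    using assms by (simp add: field_simps flip: exp_of_nat_mult)
  finally have "y ^ m / real m ^ m \<le> exp y * exp (- real m)"
    by (simp add: power_divide exp_diff exp_minus field_simps)
  then show ?thesis
    using assms by (simp add: field_simps exp_minus)
qed

text \<open>A Stirling-type upper bound: m^m e^(-m) <= m!/e, by induction on m,
  using (1 + 1/m)^m <= e in the step.\<close>

lemma power_self_exp_neg_le_fact: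
  assumes "m \<ge> 1"
  shows "real m ^ m * exp (- real m) \<le> fact m * exp (- 1)"
  using assms
proof (induction m rule: dec_induct)
  case base
  then show ?case by simp
next
  case (step m)
  have m: "real m \<ge> 1" using step by simp
  have "(1 + 1 / real m) ^ m \<le> exp (1 / real m) ^ m"
    by (intro power_mono) (use exp_ge_add_one_self[of "1 / real m"] in auto)
  also have "\<dots> = exp 1"
    using m by (simp flip: exp_of_nat_mult)
  finally have growth: "(real m + 1) ^ m \<le> exp 1 * real m ^ m"
    using m by (simp add: power_divide field_simps)
  have "real (Suc m) ^ Suc m * exp (- real (Suc m))
        = (real m + 1) * ((real m + 1) ^ m * exp (- real m) * exp (- 1))"
    by (simp add: exp_diff exp_minus field_simps)
  also have "\<dots> \<le> (real m + 1) * ((exp 1 * real m ^ m) * exp (- real m) * exp (- 1))"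
    using growth by (intro mult_left_mono mult_right_mono) auto
  also have "\<dots> = (real m + 1) * (real m ^ m * exp (- real m))"
    by (simp add: exp_minus field_simps)
  also have "\<dots> \<le> (real m + 1) * (fact m * exp (- 1))"
    using step.IH by (intro mult_left_mono) auto
  also have "\<dots> = fact (Suc m) * exp (- 1)"
    by simp
  finally show ?case .
qed

corollary exp_neg_mult_power_le_fact:
  fixes y :: real
  assumes "y > 0" and "m \<ge> 1"
  shows "exp (- y) * y ^ m \<le> fact m * exp (- 1)"
  using exp_neg_mult_power_le[OF assms] power_self_exp_neg_le_fact[OF assms(2)]
  by (simp add: mult.commute)

lemma le_at_peak:
  fixes f f' :: "real \<Rightarrow> real"
  assumes deriv: "\<And>t. (f has_real_derivative f' t) (at t)"
    and up: "\<And>t. lo \<le> t \<Longrightarrow> t \<le> c \<Longrightarrow> 0 \<le> f' t"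
    and down: "\<And>t. c \<le> t \<Longrightarrow> t \<le> hi \<Longrightarrow> f' t \<le> 0"
    and "lo \<le> x" and "x \<le> hi"
  shows "f x \<le> f c"
proof (cases "x \<le> c")
  case True
  then show ?thesis
    using assms(4) by (intro deriv_nonneg_imp_mono[OF deriv up]) auto
next
  case False
  then show ?thesis
    using assms(5) by (intro deriv_nonpos_imp_antimono[OF deriv down]) auto
qed

lemma defect_has_derivative:
  assumes "d \<ge> 2"
  shows "(defect d has_real_derivative
           exp (- x) * x ^ (d - 2) * ((real d - x) * ((x - real d)^2 - real d))) (at x)"
proof -
  obtain m where d: "d = Suc (Suc m)"
    using assms by (metis add_2_eq_Suc le_add_diff_inverse)
  have "(defect d has_real_derivative
          - exp (- x) * x ^ Suc m * (x + (x - real d)^2)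
          + exp (- x) * (real (Suc m) * x ^ m) * (x + (x - real d)^2)
          + exp (- x) * x ^ Suc m * (1 + 2 * (x - real d))) (at x)"
    unfolding defect_def d
    by (rule derivative_eq_intros refl | simp)+ (simp add: algebra_simps)
  moreover have "- exp (- x) * x ^ Suc m * (x + (x - real d)^2)
          + exp (- x) * (real (Suc m) * x ^ m) * (x + (x - real d)^2)
          + exp (- x) * x ^ Suc m * (1 + 2 * (x - real d))
        = exp (- x) * x ^ m * ((real d - x) * ((x - real d)^2 - real d))"
    unfolding d by (simp add: power2_eq_square algebra_simps)
  ultimately show ?thesis
    by (simp add: d)
qed

lemma defect_at_critical_le:
  assumes d: "d \<ge> 2" and c: "c > 0" and crit: "(c - real d)^2 = real d"
  shows "defect d c \<le> 2 * fact d * exp (- 1)"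
proof -
  have at_c: "defect d c = exp (- c) * c ^ (d - 1) * (c + real d)"
    unfolding defect_def using crit by simp
  show ?thesis
  proof (cases "c \<le> real d")
    case True
    have "defect d c \<le> (fact (d - 1) * exp (- 1)) * (2 * real d)"
      unfolding at_c
    proof (rule mult_mono)
      show "exp (- c) * c ^ (d - 1) \<le> fact (d - 1) * exp (- 1)"
        using d c by (intro exp_neg_mult_power_le_fact) auto
    qed (use True c in auto)
    also have "\<dots> = 2 * fact d * exp (- 1)"
      using d by (simp add: fact_reduce[of d])
    finally show ?thesis .
  next
    case False
    have "defect d c \<le> exp (- c) * c ^ (d - 1) * (2 * c)"
      unfolding at_c using False c by (intro mult_left_mono) auto
    also have "\<dots> = 2 * (exp (- c) * c ^ d)"
      using d power_Suc[of c "d - 1"] by (simp add: mult_ac)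
    also have "\<dots> \<le> 2 * (fact d * exp (- 1))"
      using exp_neg_mult_power_le_fact[OF c, of d] d by simp
    finally show ?thesis by simp
  qed
qed

text \<open>The uniform bound on the defect: on (0, d] it peaks at d - sqrt d,
  on [d, oo) at d + sqrt d.\<close>

lemma defect_le:
  assumes d: "d \<ge> 2" and x: "x > 0"
  shows "defect d x \<le> 2 * fact d * exp (- 1)"
proof -
  define D s where "D = real d" and "s = sqrt (real d)"
  define a b where "a = D - s" and "b = D + s"
  have D: "D \<ge> 2" and s: "s * s = D" "s > 0"
    using d by (auto simp: D_def s_def)
  have "1 < s"
    using D by (simp add: s_def D_def)
  then have "s < D"
    using s by (metis mult_strict_left_mono mult.right_neutral)
  then have ab: "0 < a" "a < D" "D < b"
    using s by (auto simp: a_def b_def)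
  have crit: "(a - D)^2 = D" "(b - D)^2 = D"
    using s by (simp_all add: a_def b_def power2_eq_square)
  have factor: "(t - D)^2 - D = (t - a) * (t - b)" for t
    using s by (simp add: a_def b_def power2_eq_square algebra_simps)
  define f' where
    "f' t = exp (- t) * t ^ (d - 2) * ((D - t) * ((t - a) * (t - b)))" for t
  have deriv: "(defect d has_real_derivative f' t) (at t)" for t
    using defect_has_derivative[OF d, of t]
    unfolding f'_def factor[symmetric] by (simp add: D_def)
  have weight: "0 \<le> exp (- t) * t ^ (d - 2)" if "t \<ge> 0" for t :: real
    using that by simp
  show ?thesis
  proof (cases "x \<le> D")
    case True
    have "defect d x \<le> defect d a"
    proof (rule le_at_peak[OF deriv, where lo = 0 and hi = D])
      fix t assume t: "0 \<le> t" "t \<le> a"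
      have "0 \<le> (D - t) * ((t - a) * (t - b))"
        using t ab by (simp add: zero_le_mult_iff mult_le_0_iff)
      then show "0 \<le> f' t"
        unfolding f'_def using weight[OF t(1)] by simp
    next
      fix t assume t: "a \<le> t" "t \<le> D"
      have "(D - t) * ((t - a) * (t - b)) \<le> 0"
        using t ab by (simp add: zero_le_mult_iff mult_le_0_iff)
      then show "f' t \<le> 0"
        unfolding f'_def using weight[of t] t ab by (simp add: mult_nonneg_nonpos)
    qed (use x True in auto)
    then show ?thesis
      using defect_at_critical_le[OF d _ crit(1)[unfolded D_def]] ab by simp
  next
    case False
    have "defect d x \<le> defect d b"
    proof (rule le_at_peak[OF deriv, where lo = D and hi = x])
      fix t assume t: "D \<le> t" "t \<le> b"
      have "0 \<le> (D - t) * ((t - a) * (t - b))"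
        using t ab by (simp add: zero_le_mult_iff mult_le_0_iff)
      then show "0 \<le> f' t"
        unfolding f'_def using weight[of t] t ab by simp
    next
      fix t assume t: "b \<le> t" "t \<le> x"
      have "(D - t) * ((t - a) * (t - b)) \<le> 0"
        using t ab by (simp add: zero_le_mult_iff mult_le_0_iff)
      then show "f' t \<le> 0"
        unfolding f'_def using weight[of t] t ab by (simp add: mult_nonneg_nonpos)
    qed (use False in auto)
    then show ?thesis
      using defect_at_critical_le[OF d _ crit(2)[unfolded D_def]] ab by simp
  qed
qed

lemma two_exp_neg_one_less_one: "2 * exp (- 1 :: real) < 1"
  using exp_1_gt_powr[of 1] by (simp add: exp_minus field_simps)

theorem lemma3p1:
  fixes d :: nat
  assumes "d \<ge> 2"
  shows "(INF x\<in>{0<..}. phi d x) > 0"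
proof -
  have "1 - 2 * exp (- 1) \<le> phi d x" if "x > 0" for x
  proof -
    have "defect d x / fact d \<le> 2 * exp (- 1)"
      using defect_le[OF assms that] by (simp add: divide_le_eq mult_ac)
    then show ?thesis
      using phi_eq_defect[OF _ that] assms by simp
  qed
  then have "1 - 2 * exp (- 1) \<le> (INF x\<in>{0<..}. phi d x)"
    by (intro cINF_greatest) auto
  then show ?thesis
    using two_exp_neg_one_less_one by linarith
qed

end
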